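(* Let $(W,S)$ be a Coxeter system with $S$ finite. Then $\operatorname{Ad}(Q_W)$ is generated by the elements $e_s$ ($s\in S$).
   Context: A Coxeter system $(W,S)$: $S$ finite, $m:S\times S\to\mathbb{N}\cup\{\infty\}$ with $m(s,s)=1$, $2\le m(s,t)=m(t,s)\le\infty$ for $s\ne t$, $W=\langle s\in S\mid (st)^{m(s,t)}=1\ (m(s,t)<\infty)\rangle$. The Coxeter quandle is $Q_W=\bigcup_{w\in W}w^{-1}Sw$ with operation $x\ast y=yxy$, and $\operatorname{Ad}(Q_W)=\langle e_x\ (x\in Q_W)\mid e_y^{-1}e_xe_y=e_{x\ast y}\ (x,y\in Q_W)\rangle$. *)

theory Defs
  imports Main "HOL-Library.Extended_Nat"
begin

text \<open>Groups given by generators and relations, realised concretely as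
  equivalence classes of words.  A word is a list of letters; the letter
  (x, False) stands for the generator x and (x, True) for its inverse.\<close>

type_synonym 'x word = "('x \<times> bool) list"

definition word_over :: "'x set \<Rightarrow> 'x word \<Rightarrow> bool" where
  "word_over X w \<longleftrightarrow> fst ` set w \<subseteq> X"

definition inv_word :: "'x word \<Rightarrow> 'x word" where
  "inv_word w = rev (map (\<lambda>(x, b). (x, \<not> b)) w)"

inductive pres_eq :: "('x word \<times> 'x word) set \<Rightarrow> 'x word \<Rightarrow> 'x word \<Rightarrow> bool"
  for R where
  refl: "pres_eq R w w"
| sym: "pres_eq R v w \<Longrightarrow> pres_eq R w v"
| trans: "pres_eq R u v \<Longrightarrow> pres_eq R v w \<Longrightarrow> pres_eq R u w"
| cancel: "pres_eq R (u @ [(x, b), (x, \<not> b)] @ v) (u @ v)"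
| rel: "(r1, r2) \<in> R \<Longrightarrow> pres_eq R (u @ r1 @ v) (u @ r2 @ v)"

definition pres_class :: "('x word \<times> 'x word) set \<Rightarrow> 'x word \<Rightarrow> 'x word set" where
  "pres_class R w = {v. pres_eq R w v}"

definition coxeter_matrix :: "'a set \<Rightarrow> ('a \<Rightarrow> 'a \<Rightarrow> enat) \<Rightarrow> bool" where
  "coxeter_matrix S m \<longleftrightarrow>
     (\<forall>s\<in>S. m s s = 1) \<and>
     (\<forall>s\<in>S. \<forall>t\<in>S. s \<noteq> t \<longrightarrow> 2 \<le> m s t \<and> m s t = m t s)"

definition cox_rels :: "'a set \<Rightarrow> ('a \<Rightarrow> 'a \<Rightarrow> enat) \<Rightarrow> ('a word \<times> 'a word) set" where
  "cox_rels S m = {(concat (replicate k [(s, False), (t, False)]), []) | s t k.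
                     s \<in> S \<and> t \<in> S \<and> m s t = enat k}"

definition cox_elt :: "'a set \<Rightarrow> ('a \<Rightarrow> 'a \<Rightarrow> enat) \<Rightarrow> 'a word \<Rightarrow> 'a word set" where
  "cox_elt S m w = pres_class (cox_rels S m) w"

definition coxeter_quandle :: "'a set \<Rightarrow> ('a \<Rightarrow> 'a \<Rightarrow> enat) \<Rightarrow> 'a word set set" where
  "coxeter_quandle S m = {cox_elt S m (inv_word w @ [(s, False)] @ w) | w s.
                            word_over S w \<and> s \<in> S}"

text \<open>Relations of Ad(Q_W): e_y^{-1} e_x e_y = e_{x*y} where x*y = yxy in W.\<close>
definition ad_rels :: "'a set \<Rightarrow> ('a \<Rightarrow> 'a \<Rightarrow> enat) \<Rightarrow> ('a word set word \<times> 'a word set word) set" where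
  "ad_rels S m = {([(y, True), (x, False), (y, False)], [(cox_elt S m (b @ a @ b), False)]) | x y a b.
                    x \<in> coxeter_quandle S m \<and> y \<in> coxeter_quandle S m \<and>
                    word_over S a \<and> word_over S b \<and> x = cox_elt S m a \<and> y = cox_elt S m b}"

definition ad_generated_by :: "'a set \<Rightarrow> ('a \<Rightarrow> 'a \<Rightarrow> enat) \<Rightarrow> 'a word set set \<Rightarrow> bool" where
  "ad_generated_by S m E \<longleftrightarrow>
     (\<forall>w. word_over (coxeter_quandle S m) w \<longrightarrow>
        (\<exists>v. word_over E v \<and> pres_eq (ad_rels S m) w v))"

end

theory Submission
  imports Defs
begin

text \<open>Every element of the Coxeter quandle is a reflection w^-1 s w.  Peeling off the
  last letter t of w, the reflection is t x t for a shorter reflection x, and the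
  defining relation of Ad(Q_W) turns e_{t x t} into e_t^-1 e_x e_t.  Induction on the
  length of w therefore writes each e_x as a word in the e_s, s \<in> S, and since
  inverses of such words are again such words, the e_s generate Ad(Q_W).\<close>

lemma pres_eq_context: "pres_eq R u v \<Longrightarrow> pres_eq R (p @ u @ q) (p @ v @ q)"
proof (induction rule: pres_eq.induct)
  case (refl w)
  then show ?case by (rule pres_eq.refl)
next
  case (sym v w)
  then show ?case by (blast intro: pres_eq.sym)
next
  case (trans u v w)
  then show ?case by (blast intro: pres_eq.trans)
next
  case (cancel u x b v)
  have "pres_eq R ((p @ u) @ [(x, b), (x, \<not> b)] @ (v @ q)) ((p @ u) @ (v @ q))"
    by (rule pres_eq.cancel)
  then show ?case by simp
next
  case (rel r1 r2 u v)
  have "pres_eq R ((p @ u) @ r1 @ (v @ q)) ((p @ u) @ r2 @ (v @ q))"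
    by (rule pres_eq.rel[OF rel])
  then show ?case by simp
qed

declare pres_eq.trans [trans]

lemma pres_eq_append:
  assumes "pres_eq R u u'" and "pres_eq R v v'"
  shows "pres_eq R (u @ v) (u' @ v')"
proof -
  have "pres_eq R ([] @ u @ v) ([] @ u' @ v)" by (rule pres_eq_context[OF assms(1)])
  moreover have "pres_eq R (u' @ v @ []) (u' @ v' @ [])" by (rule pres_eq_context[OF assms(2)])
  ultimately show ?thesis by (auto intro: pres_eq.trans)
qed

lemma inv_word_inv_word [simp]: "inv_word (inv_word w) = w"
  by (induction w) (auto simp: inv_word_def)

lemma pres_eq_append_inv_word: "pres_eq R (v @ inv_word v) []"
proof (induction v)
  case Nil
  then show ?case by (simp add: inv_word_def pres_eq.refl)
next
  case (Cons a v)
  obtain x b where a: "a = (x, b)" by (cases a)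
  have "pres_eq R ([a] @ (v @ inv_word v) @ [(x, \<not> b)]) ([a] @ [] @ [(x, \<not> b)])"
    by (rule pres_eq_context[OF Cons])
  moreover have "pres_eq R ([] @ [(x, b), (x, \<not> b)] @ []) ([] @ [])"
    by (rule pres_eq.cancel)
  ultimately show ?case by (auto simp: inv_word_def a intro: pres_eq.trans)
qed

lemma pres_eq_inv_word:
  assumes "pres_eq R u v"
  shows "pres_eq R (inv_word u) (inv_word v)"
proof -
  have "pres_eq R (inv_word u @ [] @ []) (inv_word u @ (v @ inv_word v) @ [])"
    by (rule pres_eq_context[OF pres_eq.sym[OF pres_eq_append_inv_word]])
  also have "pres_eq R \<dots> (inv_word u @ (u @ inv_word v) @ [])"
    by (rule pres_eq_context[OF pres_eq_append[OF pres_eq.sym[OF assms] pres_eq.refl]])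
  also have "pres_eq R \<dots> ([] @ [] @ inv_word v)"
    using pres_eq_context[OF pres_eq_append_inv_word[of R "inv_word u"], of "[]" "inv_word v"]
    by simp
  finally show ?thesis by simp
qed

lemma pres_class_eq: "pres_eq R u v \<Longrightarrow> pres_class R u = pres_class R v"
  unfolding pres_class_def by (auto intro: pres_eq.trans pres_eq.sym)

lemma word_over_append [simp]: "word_over X (u @ v) \<longleftrightarrow> word_over X u \<and> word_over X v"
  by (auto simp: word_over_def)

lemma word_over_Cons [simp]: "word_over X ((x, b) # w) \<longleftrightarrow> x \<in> X \<and> word_over X w"
  by (auto simp: word_over_def)

lemma word_over_Nil [simp]: "word_over X []"
  by (simp add: word_over_def)

lemma word_over_inv_word [simp]: "word_over X (inv_word v) \<longleftrightarrow> word_over X v"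
  by (force simp: word_over_def inv_word_def image_image split_def)

lemma pres_eq_word_over_if_letters:
  assumes "\<And>x c. x \<in> X \<Longrightarrow> \<exists>v. word_over E v \<and> pres_eq R [(x, c)] v"
  shows "word_over X w \<Longrightarrow> \<exists>v. word_over E v \<and> pres_eq R w v"
proof (induction w)
  case Nil
  show ?case by (intro exI[of _ "[]"]) (simp add: pres_eq.refl)
next
  case (Cons a w)
  obtain x c where a: "a = (x, c)" by (cases a)
  obtain v1 where "word_over E v1" "pres_eq R [(x, c)] v1"
    using assms Cons.prems a by auto
  moreover obtain v2 where "word_over E v2" "pres_eq R w v2"
    using Cons a by auto
  ultimately show ?case
    using pres_eq_append[of R "[(x, c)]" v1 w v2] a by (intro exI[of _ "v1 @ v2"]) simp
qed

lemma pres_eq_letter_if_positive: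
  assumes "word_over E v" and "pres_eq R [(x, False)] v"
  shows "\<exists>v. word_over E v \<and> pres_eq R [(x, c)] v"
proof (cases c)
  case True
  have "pres_eq R [(x, True)] (inv_word v)"
    using pres_eq_inv_word[OF assms(2)] by (simp add: inv_word_def)
  with assms(1) True show ?thesis by (intro exI[of _ "inv_word v"]) simp
next
  case False
  with assms show ?thesis by (intro exI[of _ v]) simp
qed

lemma cox_rels_letter_inverse:
  assumes "coxeter_matrix S m" and "t \<in> S"
  shows "pres_eq (cox_rels S m) [(t, b)] [(t, False)]"
proof (cases b)
  case True
  have "m t t = enat 1" using assms by (simp add: coxeter_matrix_def one_enat_def)
  then have "([(t, False), (t, False)], []) \<in> cox_rels S m"
    unfolding cox_rels_def using assms(2)
    by (intro CollectI exI[of _ t] exI[of _ 1]) simp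
  from pres_eq.rel[OF this, of "[(t, True)]" "[]"]
  have "pres_eq (cox_rels S m) [(t, True)] [(t, True), (t, False), (t, False)]"
    by (simp add: pres_eq.sym)
  moreover have "pres_eq (cox_rels S m) [(t, True), (t, False), (t, False)] [(t, False)]"
    using pres_eq.cancel[of "cox_rels S m" "[]" t True "[(t, False)]"] by simp
  ultimately show ?thesis using True by (auto intro: pres_eq.trans)
qed (simp add: pres_eq.refl)

lemma cox_elt_conj_snoc:
  assumes "coxeter_matrix S m" and "t \<in> S"
  shows "cox_elt S m (inv_word (w @ [(t, b)]) @ a @ w @ [(t, b)])
       = cox_elt S m ([(t, False)] @ (inv_word w @ a @ w) @ [(t, False)])"
proof -
  have "pres_eq (cox_rels S m) ([(t, \<not> b)] @ (inv_word w @ a @ w) @ [(t, b)])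
          ([(t, False)] @ (inv_word w @ a @ w) @ [(t, False)])"
    by (intro pres_eq_append[OF cox_rels_letter_inverse pres_eq_append[OF pres_eq.refl
          cox_rels_letter_inverse]] assms)
  then show ?thesis
    unfolding cox_elt_def by (intro pres_class_eq) (simp add: inv_word_def)
qed

lemma reflection_in_coxeter_quandle:
  "word_over S w \<Longrightarrow> s \<in> S \<Longrightarrow> cox_elt S m (inv_word w @ [(s, False)] @ w) \<in> coxeter_quandle S m"
  unfolding coxeter_quandle_def by blast

lemma ad_rels_conj_generator:
  assumes "cox_elt S m a \<in> coxeter_quandle S m" and "word_over S a" and "t \<in> S"
  shows "pres_eq (ad_rels S m) [(cox_elt S m ([(t, False)] @ a @ [(t, False)]), False)]
           [(cox_elt S m [(t, False)], True), (cox_elt S m a, False), (cox_elt S m [(t, False)], False)]"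
proof -
  have "cox_elt S m [(t, False)] \<in> coxeter_quandle S m"
    using reflection_in_coxeter_quandle[of S "[]" t m] assms(3) by (simp add: inv_word_def)
  then have "([(cox_elt S m [(t, False)], True), (cox_elt S m a, False), (cox_elt S m [(t, False)], False)],
             [(cox_elt S m ([(t, False)] @ a @ [(t, False)]), False)]) \<in> ad_rels S m"
    unfolding ad_rels_def using assms
    by (intro CollectI exI[of _ "cox_elt S m a"] exI[of _ "cox_elt S m [(t, False)]"] exI[of _ a]
        exI[of _ "[(t, False)]"]) simp
  from pres_eq.sym[OF pres_eq.rel[OF this, of "[]" "[]"]] show ?thesis by simp
qed

lemma reflection_generated:
  assumes "coxeter_matrix S m" and "s \<in> S"
  shows "word_over S w \<Longrightarrow> \<exists>v. word_over ((\<lambda>s. cox_elt S m [(s, False)]) ` S) v \<and>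
           pres_eq (ad_rels S m) [(cox_elt S m (inv_word w @ [(s, False)] @ w), False)] v"
proof (induction w rule: rev_induct)
  case Nil
  show ?case
    using assms(2) by (intro exI[of _ "[(cox_elt S m [(s, False)], False)]"])
      (auto simp: inv_word_def pres_eq.refl)
next
  case (snoc tb w)
  obtain t b where tb: "tb = (t, b)" by (cases tb)
  have t: "t \<in> S" and w: "word_over S w" using snoc.prems tb by auto
  define a where "a = inv_word w @ [(s, False)] @ w"
  define e_t where "e_t = cox_elt S m [(t, False)]"
  obtain v where v: "word_over ((\<lambda>s. cox_elt S m [(s, False)]) ` S) v"
    and x_v: "pres_eq (ad_rels S m) [(cox_elt S m a, False)] v"
    using snoc.IH w a_def by blast
  have "cox_elt S m (inv_word (w @ [tb]) @ [(s, False)] @ w @ [tb])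
      = cox_elt S m ([(t, False)] @ a @ [(t, False)])"
    unfolding tb a_def by (rule cox_elt_conj_snoc[OF assms(1) t])
  moreover have "pres_eq (ad_rels S m) [(cox_elt S m ([(t, False)] @ a @ [(t, False)]), False)]
      ([(e_t, True)] @ [(cox_elt S m a, False)] @ [(e_t, False)])"
    using ad_rels_conj_generator[OF reflection_in_coxeter_quandle[OF w assms(2)] _ t] w assms(2)
    by (simp add: a_def e_t_def)
  ultimately have "pres_eq (ad_rels S m) [(cox_elt S m (inv_word (w @ [tb]) @ [(s, False)] @ w @ [tb]), False)]
      ([(e_t, True)] @ [(cox_elt S m a, False)] @ [(e_t, False)])"
    by simp
  also have "pres_eq (ad_rels S m) \<dots> ([(e_t, True)] @ v @ [(e_t, False)])"
    by (rule pres_eq_context[OF x_v])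
  finally show ?case
    using v t by (intro exI[of _ "[(e_t, True)] @ v @ [(e_t, False)]"]) (auto simp: e_t_def)
qed

lemma quandle_letter_generated:
  assumes "coxeter_matrix S m" and "x \<in> coxeter_quandle S m"
  shows "\<exists>v. word_over ((\<lambda>s. cox_elt S m [(s, False)]) ` S) v \<and> pres_eq (ad_rels S m) [(x, c)] v"
proof -
  from assms(2) obtain w s where "x = cox_elt S m (inv_word w @ [(s, False)] @ w)" "word_over S w" "s \<in> S"
    unfolding coxeter_quandle_def by blast
  with reflection_generated[OF assms(1)] obtain v
    where "word_over ((\<lambda>s. cox_elt S m [(s, False)]) ` S) v" "pres_eq (ad_rels S m) [(x, False)] v"
    by blast
  then show ?thesis by (rule pres_eq_letter_if_positive)
qed

theorem proposition2p3:
  fixes S :: "'a set" and m :: "'a \<Rightarrow> 'a \<Rightarrow> enat"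
  assumes "finite S" and "coxeter_matrix S m"
  shows "ad_generated_by S m ((\<lambda>s. cox_elt S m [(s, False)]) ` S)"
  unfolding ad_generated_by_def
  by (intro allI impI pres_eq_word_over_if_letters[OF quandle_letter_generated[OF assms(2)]])

end
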